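(* Fix $1<p\le 2$ and $x,y,z,w\in L_p$. Then $$\|y-z\|_p^2+(p-1)\|x-w\|_p^2\le \|x-y\|_p^2+\|y-w\|_p^2+\|w-z\|_p^2+\|z-x\|_p^2.$$
   Context: $L_p$ denotes the Lebesgue space $L_p$ (of an arbitrary measure space) with norm $\|\cdot\|_p$. *)

theory Defs
  imports "HOL-Analysis.Analysis"
begin

definition memLp :: "real \<Rightarrow> 'a measure \<Rightarrow> ('a \<Rightarrow> real) \<Rightarrow> bool" where
  "memLp p M f \<longleftrightarrow> f \<in> borel_measurable M \<and> integrable M (\<lambda>x. \<bar>f x\<bar> powr p)"

definition Lp_norm :: "real \<Rightarrow> 'a measure \<Rightarrow> ('a \<Rightarrow> real) \<Rightarrow> real" where
  "Lp_norm p M f = (\<integral>x. \<bar>f x\<bar> powr p \<partial>M) powr (1 / p)"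

end

theory Submission
  imports Defs
begin

(* For 1 < p <= 2 the space L_p is 2-uniformly smooth with constant p - 1:
   ||f||^2 + (p - 1) ||g||^2 <= (||f + g||^2 + ||f - g||^2) / 2.
   Pointwise this is the two-point inequality
   (a^2 + (p - 1) b^2)^(p/2) <= (|a + b|^p + |a - b|^p) / 2, which follows from Bernoulli's
   inequality and (1 + x)^p + (1 - x)^p >= 2 + p (p - 1) x^2.  It is lifted to norms by the
   reverse Minkowski inequality in L_(p/2), applied to f^2 and (p - 1) g^2, and by concavity
   of t |-> t^(p/2).
   For the four-point inequality let m be the midpoint of y and z.  Smoothness applied to the
   triangles x y z and w y z bounds ||y - z||^2 + 4 (p - 1) ||x - m||^2 and
   ||y - z||^2 + 4 (p - 1) ||w - m||^2 by sums of squared side lengths, and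
   ||x - w||^2 <= 2 ||x - m||^2 + 2 ||w - m||^2 closes the argument. *)

lemma powr_convex_nonpos:
  fixes e :: real
  assumes "e \<le> 0"
  shows "convex_on {0<..} (\<lambda>x. x powr e)"
proof (rule f''_ge0_imp_convex)
  fix x :: real assume x: "x \<in> {0<..}"
  show "((\<lambda>x. x powr e) has_real_derivative e * x powr (e - 1)) (at x)"
    using x by (auto intro!: derivative_eq_intros)
  show "((\<lambda>x. e * x powr (e - 1)) has_real_derivative e * ((e - 1) * x powr (e - 1 - 1))) (at x)"
    using x by (auto intro!: derivative_eq_intros)
  show "0 \<le> e * ((e - 1) * x powr (e - 1 - 1))"
    using assms by (intro mult_nonpos_nonpos mult_nonpos_nonneg) auto
qed simp

lemma powr_concave:
  fixes r :: real
  assumes "0 < r" "r \<le> 1"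
  shows "concave_on {0..} (\<lambda>x. x powr r)"
proof (rule concave_on_linorderI)
  have pos: "concave_on {0<..} (\<lambda>x. x powr r)"
  proof (rule f''_le0_imp_concave)
    fix x :: real assume x: "x \<in> {0<..}"
    show "((\<lambda>x. x powr r) has_real_derivative r * x powr (r - 1)) (at x)"
      using x by (auto intro!: derivative_eq_intros)
    show "((\<lambda>x. r * x powr (r - 1)) has_real_derivative r * ((r - 1) * x powr (r - 1 - 1))) (at x)"
      using x by (auto intro!: derivative_eq_intros)
    show "r * ((r - 1) * x powr (r - 1 - 1)) \<le> 0"
      using assms by (intro mult_nonneg_nonpos mult_nonpos_nonneg) auto
  qed simp
  fix t x y :: real
  assume t: "0 < t" "t < 1" and xy: "x \<in> {0..}" "y \<in> {0..}" "x < y"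
  show "(1 - t) * x powr r + t * y powr r \<le> ((1 - t) *\<^sub>R x + t *\<^sub>R y) powr r"
  proof (cases "x = 0")
    case True
    have "t powr 1 \<le> t powr r"
      using t assms by (intro powr_mono') auto
    then have "t * y powr r \<le> t powr r * y powr r"
      using t by (intro mult_right_mono) auto
    then show ?thesis
      using True t xy by (simp add: powr_mult)
  next
    case False
    then show ?thesis
      using concave_onD[OF pos, of t x y] t xy by auto
  qed
qed simp

lemma two_le_powr_add_powr:
  fixes s e :: real
  assumes "\<bar>s\<bar> < 1" "e \<le> 0"
  shows "2 \<le> (1 + s) powr e + (1 - s) powr e"
proof -
  have "1 = ((1 - 1/2) *\<^sub>R (1 + s) + (1/2) *\<^sub>R (1 - s)) powr e"
    by (simp add: add_divide_distrib[symmetric])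
  also have "\<dots> \<le> (1 - 1/2) * (1 + s) powr e + (1/2) * (1 - s) powr e"
    using assms by (intro convex_onD[OF powr_convex_nonpos]) auto
  finally show ?thesis
    by simp
qed

lemma powr_diff_powr_ge:
  fixes q x :: real
  assumes "0 < q" "q \<le> 1" "0 \<le> x" "x \<le> 1"
  shows "2 * q * x \<le> (1 + x) powr q - (1 - x) powr q"
proof -
  define f where "f s = (1 + s) powr q - (1 - s) powr q - 2 * q * s" for s :: real
  have "f 0 \<le> f x"
  proof (rule DERIV_nonneg_imp_increasing_open[OF \<open>0 \<le> x\<close>])
    fix s :: real assume s: "0 < s" "s < x"
    have "(f has_real_derivative q * ((1 + s) powr (q - 1) + (1 - s) powr (q - 1) - 2)) (at s)"
      unfolding f_def using s assms by (auto intro!: derivative_eq_intros simp: algebra_simps)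
    moreover have "0 \<le> q * ((1 + s) powr (q - 1) + (1 - s) powr (q - 1) - 2)"
      using two_le_powr_add_powr[of s "q - 1"] s assms by simp
    ultimately show "\<exists>d. (f has_real_derivative d) (at s) \<and> 0 \<le> d"
      by blast
  next
    show "continuous_on {0..x} f"
      unfolding f_def using assms by (intro continuous_intros continuous_on_powr') auto
  qed
  then show ?thesis
    unfolding f_def by simp
qed

lemma powr_add_powr_ge_quadratic:
  fixes p x :: real
  assumes "1 < p" "p \<le> 2" "\<bar>x\<bar> \<le> 1"
  shows "2 + p * (p - 1) * x\<^sup>2 \<le> (1 + x) powr p + (1 - x) powr p"
proof -
  have nonneg: "2 + p * (p - 1) * x\<^sup>2 \<le> (1 + x) powr p + (1 - x) powr p"
    if x: "0 \<le> x" "x \<le> 1" for x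
  proof -
    define f where "f s = (1 + s) powr p + (1 - s) powr p - p * (p - 1) * s\<^sup>2" for s :: real
    have "f 0 \<le> f x"
    proof (rule DERIV_nonneg_imp_increasing_open[OF \<open>0 \<le> x\<close>])
      fix s :: real assume s: "0 < s" "s < x"
      have "(f has_real_derivative p * ((1 + s) powr (p - 1) - (1 - s) powr (p - 1) - 2 * (p - 1) * s)) (at s)"
        unfolding f_def using s x assms by (auto intro!: derivative_eq_intros simp: algebra_simps)
      moreover have "0 \<le> p * ((1 + s) powr (p - 1) - (1 - s) powr (p - 1) - 2 * (p - 1) * s)"
        using powr_diff_powr_ge[of "p - 1" s] s x assms by simp
      ultimately show "\<exists>d. (f has_real_derivative d) (at s) \<and> 0 \<le> d"
        by blast
    next
      show "continuous_on {0..x} f"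
        unfolding f_def using x assms by (intro continuous_intros continuous_on_powr') auto
    qed
    then show ?thesis
      unfolding f_def by simp
  qed
  show ?thesis
  proof (cases "0 \<le> x")
    case True
    then show ?thesis using nonneg assms by simp
  next
    case False
    then show ?thesis using nonneg[of "- x"] assms by simp
  qed
qed

lemma powr_one_plus_le:
  fixes r t :: real
  assumes "0 \<le> r" "r \<le> 1" "-1 < t"
  shows "(1 + t) powr r \<le> 1 + r * t"
  using Youngs_inequality_0[of r "1 - r" "1 + t" 1] assms by (simp add: algebra_simps)

lemma power2_powr_half:
  fixes x p :: real
  shows "(x\<^sup>2) powr (p / 2) = \<bar>x\<bar> powr p"
proof -
  have "(\<bar>x\<bar> powr 2) powr (p / 2) = \<bar>x\<bar> powr p"
    unfolding powr_powr by simp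
  then show ?thesis
    by simp
qed

lemma two_point_inequality:
  fixes p a b :: real
  assumes "1 < p" "p \<le> 2"
  shows "(a\<^sup>2 + (p - 1) * b\<^sup>2) powr (p / 2) \<le> (\<bar>a + b\<bar> powr p + \<bar>a - b\<bar> powr p) / 2"
proof -
  have dominant: "(a\<^sup>2 + (p - 1) * b\<^sup>2) powr (p / 2) \<le> (\<bar>a + b\<bar> powr p + \<bar>a - b\<bar> powr p) / 2"
    if ba: "\<bar>b\<bar> \<le> \<bar>a\<bar>" "a \<noteq> 0" for a b :: real
  proof -
    define x where "x = b / a"
    have x: "\<bar>x\<bar> \<le> 1" "b = a * x"
      using ba by (auto simp: x_def divide_le_eq_1)
    have "(a\<^sup>2 + (p - 1) * b\<^sup>2) powr (p / 2) = \<bar>a\<bar> powr p * (1 + (p - 1) * x\<^sup>2) powr (p / 2)"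
    proof -
      have "a\<^sup>2 + (p - 1) * b\<^sup>2 = a\<^sup>2 * (1 + (p - 1) * x\<^sup>2)"
        using x by (simp add: algebra_simps)
      then show ?thesis
        using assms by (simp add: powr_mult power2_powr_half)
    qed
    also have "\<dots> \<le> \<bar>a\<bar> powr p * (1 + (p / 2) * ((p - 1) * x\<^sup>2))"
      using assms by (intro mult_left_mono powr_one_plus_le) (auto intro: less_le_trans[of "-1" 0])
    also have "\<dots> \<le> \<bar>a\<bar> powr p * (((1 + x) powr p + (1 - x) powr p) / 2)"
      using powr_add_powr_ge_quadratic[OF assms x(1)] by (intro mult_left_mono) auto
    also have "\<dots> = (\<bar>a + b\<bar> powr p + \<bar>a - b\<bar> powr p) / 2"
    proof -
      have "a + b = a * (1 + x)" "a - b = a * (1 - x)"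
        using x(2) by (simp_all add: algebra_simps)
      then have "\<bar>a + b\<bar> = \<bar>a\<bar> * (1 + x)" "\<bar>a - b\<bar> = \<bar>a\<bar> * (1 - x)"
        using x(1) by (simp_all add: abs_mult)
      then have "\<bar>a + b\<bar> powr p = \<bar>a\<bar> powr p * (1 + x) powr p"
          "\<bar>a - b\<bar> powr p = \<bar>a\<bar> powr p * (1 - x) powr p"
        using x(1) by (simp_all add: powr_mult)
      then show ?thesis
        by (simp add: algebra_simps)
    qed
    finally show ?thesis .
  qed
  show ?thesis
  proof (cases "\<bar>b\<bar> \<le> \<bar>a\<bar>")
    case True
    then show ?thesis
      using dominant[of b a] by (cases "a = 0") auto
  next
    case False
    have "a\<^sup>2 + (p - 1) * b\<^sup>2 \<le> b\<^sup>2 + (p - 1) * a\<^sup>2"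
    proof -
      have "(2 - p) * a\<^sup>2 \<le> (2 - p) * b\<^sup>2"
        using False assms by (intro mult_left_mono) (auto simp: abs_le_square_iff)
      then show ?thesis by (simp add: algebra_simps)
    qed
    then have "(a\<^sup>2 + (p - 1) * b\<^sup>2) powr (p / 2) \<le> (b\<^sup>2 + (p - 1) * a\<^sup>2) powr (p / 2)"
      using assms by (intro powr_mono2) auto
    also have "\<dots> \<le> (\<bar>a + b\<bar> powr p + \<bar>a - b\<bar> powr p) / 2"
      using dominant[of a b] False by (simp add: add.commute abs_minus_commute)
    finally show ?thesis .
  qed
qed

lemma powr_mean_le:
  fixes r a b :: real
  assumes "0 < r" "r \<le> 1" "0 \<le> a" "0 \<le> b"
  shows "((a powr r + b powr r) / 2) powr (1 / r) \<le> (a + b) / 2"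
proof -
  have "(1 - 1/2) * a powr r + (1/2) * b powr r \<le> ((1 - 1/2) *\<^sub>R a + (1/2) *\<^sub>R b) powr r"
    using assms by (intro concave_onD[OF powr_concave]) auto
  then have "(a powr r + b powr r) / 2 \<le> ((a + b) / 2) powr r"
    by (simp add: add_divide_distrib)
  then have "((a powr r + b powr r) / 2) powr (1 / r) \<le> (((a + b) / 2) powr r) powr (1 / r)"
    using assms by (intro powr_mono2) auto
  also have "\<dots> = (a + b) / 2"
    using assms by (simp add: powr_powr)
  finally show ?thesis .
qed

lemma reverse_Minkowski_integral:
  fixes M :: "'a measure" and r :: real and F G :: "'a \<Rightarrow> real"
  assumes r: "0 < r" "r \<le> 1" and nonneg: "\<And>t. 0 \<le> F t" "\<And>t. 0 \<le> G t"
    and int: "integrable M (\<lambda>t. F t powr r)" "integrable M (\<lambda>t. G t powr r)"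
      "integrable M (\<lambda>t. (F t + G t) powr r)"
  shows "(\<integral>t. F t powr r \<partial>M) powr (1 / r) + (\<integral>t. G t powr r \<partial>M) powr (1 / r)
    \<le> (\<integral>t. (F t + G t) powr r \<partial>M) powr (1 / r)"
proof -
  define A where "A = (\<integral>t. F t powr r \<partial>M) powr (1 / r)"
  define B where "B = (\<integral>t. G t powr r \<partial>M) powr (1 / r)"
  define S where "S = (\<integral>t. (F t + G t) powr r \<partial>M)"
  have A: "0 \<le> A" "A powr r = (\<integral>t. F t powr r \<partial>M)"
    unfolding A_def using r by (auto simp: powr_powr intro!: integral_nonneg_AE)
  have B: "0 \<le> B" "B powr r = (\<integral>t. G t powr r \<partial>M)"
    unfolding B_def using r by (auto simp: powr_powr intro!: integral_nonneg_AE)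
  have "(A + B) powr r \<le> S"
  proof (cases "A = 0 \<or> B = 0")
    case True
    then have "(A + B) powr r = A powr r \<or> (A + B) powr r = B powr r"
      by auto
    moreover have "(\<integral>t. F t powr r \<partial>M) \<le> S" "(\<integral>t. G t powr r \<partial>M) \<le> S"
      unfolding S_def using int nonneg r by (auto intro!: integral_mono powr_mono2)
    ultimately show ?thesis
      using A B by auto
  next
    case False
    with A B have AB: "0 < A" "0 < B"
      by auto
    define l where "l = A / (A + B)"
    have l: "0 \<le> l" "l \<le> 1" "1 - l = B / (A + B)"
      using AB by (auto simp: l_def field_simps)
    \<comment> \<open>Concavity of \<open>x powr r\<close> at \<open>F t / A\<close> and \<open>G t / B\<close>;
      the left side integrates to \<open>(A + B) powr r\<close>.\<close>
    have pointwise: "(A + B) powr r * (l * (F t powr r / A powr r) + (1 - l) * (G t powr r / B powr r))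
        \<le> (F t + G t) powr r" for t
    proof -
      have "l * (F t / A) powr r + (1 - l) * (G t / B) powr r
          \<le> ((1 - (1 - l)) *\<^sub>R (F t / A) + (1 - l) *\<^sub>R (G t / B)) powr r"
        using concave_onD[OF powr_concave[OF r], of "1 - l" "F t / A" "G t / B"] l(1,2) AB nonneg
        by simp
      also have "(1 - (1 - l)) *\<^sub>R (F t / A) + (1 - l) *\<^sub>R (G t / B) = (F t + G t) / (A + B)"
      proof -
        have "l * (F t / A) = F t / (A + B)"
          unfolding l_def using AB by simp
        moreover have "(1 - l) * (G t / B) = G t / (A + B)"
          unfolding l(3) using AB by simp
        ultimately show ?thesis
          by (simp add: add_divide_distrib)
      qed
      finally show ?thesis
        using AB nonneg by (simp add: powr_divide field_simps)
    qed
    have "(A + B) powr r = (A + B) powr r * (l * ((\<integral>t. F t powr r \<partial>M) / A powr r)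
        + (1 - l) * ((\<integral>t. G t powr r \<partial>M) / B powr r))"
      using AB by (simp flip: A(2) B(2))
    also have "\<dots>
        = (\<integral>t. (A + B) powr r * (l * (F t powr r / A powr r) + (1 - l) * (G t powr r / B powr r)) \<partial>M)"
      using int by simp
    also have "\<dots> \<le> S"
      unfolding S_def using int pointwise by (intro integral_mono) auto
    finally show ?thesis .
  qed
  then have "((A + B) powr r) powr (1 / r) \<le> S powr (1 / r)"
    using r by (intro powr_mono2) auto
  then show ?thesis
    using A B r by (simp add: A_def B_def S_def powr_powr)
qed

lemma abs_add_powr_le:
  fixes u v p :: real
  assumes "0 < p"
  shows "\<bar>u + v\<bar> powr p \<le> 2 powr p * (\<bar>u\<bar> powr p + \<bar>v\<bar> powr p)"
proof -
  have "\<bar>u + v\<bar> powr p \<le> (2 * max \<bar>u\<bar> \<bar>v\<bar>) powr p"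
    using assms by (intro powr_mono2) auto
  also have "\<dots> = 2 powr p * max \<bar>u\<bar> \<bar>v\<bar> powr p"
    by (simp add: powr_mult)
  also have "\<dots> \<le> 2 powr p * (\<bar>u\<bar> powr p + \<bar>v\<bar> powr p)"
    by (intro mult_left_mono) (auto simp: max_def)
  finally show ?thesis .
qed

lemma memLp_add:
  assumes "0 < p" "memLp p M f" "memLp p M g"
  shows "memLp p M (\<lambda>t. f t + g t)"
proof -
  have meas: "(\<lambda>t. f t + g t) \<in> borel_measurable M"
    using assms by (auto simp: memLp_def)
  have "integrable M (\<lambda>t. \<bar>f t + g t\<bar> powr p)"
  proof (rule Bochner_Integration.integrable_bound)
    show "integrable M (\<lambda>t. 2 powr p * (\<bar>f t\<bar> powr p + \<bar>g t\<bar> powr p))"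
      using assms by (simp add: memLp_def)
    show "(\<lambda>t. \<bar>f t + g t\<bar> powr p) \<in> borel_measurable M"
      using meas by measurable
    show "AE t in M. norm (\<bar>f t + g t\<bar> powr p) \<le> norm (2 powr p * (\<bar>f t\<bar> powr p + \<bar>g t\<bar> powr p))"
      using abs_add_powr_le[OF \<open>0 < p\<close>] by simp
  qed
  then show ?thesis
    using meas by (simp add: memLp_def)
qed

lemma memLp_cmult:
  assumes "memLp p M f"
  shows "memLp p M (\<lambda>t. c * f t)"
  using assms by (auto simp: memLp_def abs_mult powr_mult)

lemma memLp_diff:
  assumes "0 < p" "memLp p M f" "memLp p M g"
  shows "memLp p M (\<lambda>t. f t - g t)"
  using memLp_add[OF assms(1,2) memLp_cmult[OF assms(3), of "-1"]] by simp

lemma Lp_norm_cong_abs: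
  assumes "\<And>t. \<bar>f t\<bar> = \<bar>g t\<bar>"
  shows "Lp_norm p M f = Lp_norm p M g"
  using assms by (simp add: Lp_norm_def)

lemma Lp_norm_cmult:
  assumes "0 < p"
  shows "Lp_norm p M (\<lambda>t. c * f t) = \<bar>c\<bar> * Lp_norm p M f"
proof -
  have "(\<integral>t. \<bar>c * f t\<bar> powr p \<partial>M) = \<bar>c\<bar> powr p * (\<integral>t. \<bar>f t\<bar> powr p \<partial>M)"
    by (simp add: abs_mult powr_mult)
  moreover have "0 \<le> (\<integral>t. \<bar>f t\<bar> powr p \<partial>M)"
    by (simp add: integral_nonneg_AE)
  ultimately show ?thesis
    using assms by (simp add: Lp_norm_def powr_mult powr_powr)
qed

lemma Lp_norm_power2:
  "(Lp_norm p M f)\<^sup>2 = (\<integral>t. \<bar>f t\<bar> powr p \<partial>M) powr (2 / p)"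
  by (simp add: Lp_norm_def power2_eq_square flip: powr_add)

lemma Lp_norm_power2_uniform_smoothness:
  fixes M :: "'a measure" and f g :: "'a \<Rightarrow> real"
  assumes p: "1 < p" "p \<le> 2" and f: "memLp p M f" and g: "memLp p M g"
  shows "(Lp_norm p M f)\<^sup>2 + (p - 1) * (Lp_norm p M g)\<^sup>2
    \<le> ((Lp_norm p M (\<lambda>t. f t + g t))\<^sup>2 + (Lp_norm p M (\<lambda>t. f t - g t))\<^sup>2) / 2"
proof -
  define c where "c = sqrt (p - 1)"
  define I where "I h = (\<integral>t. \<bar>h t\<bar> powr p \<partial>M)" for h :: "'a \<Rightarrow> real"
  have r: "0 < p / 2" "p / 2 \<le> 1"
    using p by auto
  have int: "integrable M (\<lambda>t. \<bar>h t\<bar> powr p)" if "memLp p M h" for h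
    using that by (simp add: memLp_def)
  have Lp: "memLp p M (\<lambda>t. f t + g t)" "memLp p M (\<lambda>t. f t - g t)" "memLp p M (\<lambda>t. c * g t)"
    using p f g by (auto intro: memLp_add memLp_diff memLp_cmult)
  have norm_sq: "(Lp_norm p M h)\<^sup>2 = (\<integral>t. (h t)\<^sup>2 powr (p / 2) \<partial>M) powr (1 / (p / 2))" for h
    by (simp add: Lp_norm_power2 power2_powr_half)
  have I_eq: "I h = ((Lp_norm p M h)\<^sup>2) powr (p / 2)" for h
    using p by (simp add: I_def Lp_norm_power2 powr_powr integral_nonneg_AE)
  have two_point: "((f t)\<^sup>2 + (c * g t)\<^sup>2) powr (p / 2)
      \<le> (\<bar>f t + g t\<bar> powr p + \<bar>f t - g t\<bar> powr p) / 2" for t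
    using two_point_inequality[OF p, of "f t" "g t"] p by (simp add: c_def power_mult_distrib)
  have int_two_point: "integrable M (\<lambda>t. ((f t)\<^sup>2 + (c * g t)\<^sup>2) powr (p / 2))"
  proof (rule Bochner_Integration.integrable_bound)
    show "integrable M (\<lambda>t. (\<bar>f t + g t\<bar> powr p + \<bar>f t - g t\<bar> powr p) / 2)"
      using int Lp by auto
    have "f \<in> borel_measurable M" "g \<in> borel_measurable M"
      using f g by (simp_all add: memLp_def)
    then show "(\<lambda>t. ((f t)\<^sup>2 + (c * g t)\<^sup>2) powr (p / 2)) \<in> borel_measurable M"
      by measurable
    show "AE t in M. norm (((f t)\<^sup>2 + (c * g t)\<^sup>2) powr (p / 2))
        \<le> norm ((\<bar>f t + g t\<bar> powr p + \<bar>f t - g t\<bar> powr p) / 2)"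
      using two_point by (intro AE_I2) (auto intro: order_trans[OF _ abs_ge_self])
  qed
  have "(Lp_norm p M f)\<^sup>2 + (p - 1) * (Lp_norm p M g)\<^sup>2
      = (Lp_norm p M f)\<^sup>2 + (Lp_norm p M (\<lambda>t. c * g t))\<^sup>2"
    using p by (simp add: Lp_norm_cmult c_def power_mult_distrib)
  also have "\<dots> \<le> (\<integral>t. ((f t)\<^sup>2 + (c * g t)\<^sup>2) powr (p / 2) \<partial>M) powr (1 / (p / 2))"
    unfolding norm_sq using int_two_point int[OF f] int[OF Lp(3)]
    by (intro reverse_Minkowski_integral[OF r]) (simp_all add: power2_powr_half)
  also have "\<dots> \<le> ((I (\<lambda>t. f t + g t) + I (\<lambda>t. f t - g t)) / 2) powr (1 / (p / 2))"
  proof (rule powr_mono2)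
    have "(\<integral>t. ((f t)\<^sup>2 + (c * g t)\<^sup>2) powr (p / 2) \<partial>M)
        \<le> (\<integral>t. (\<bar>f t + g t\<bar> powr p + \<bar>f t - g t\<bar> powr p) / 2 \<partial>M)"
      using int_two_point int[OF Lp(1)] int[OF Lp(2)] two_point by (intro integral_mono) auto
    also have "\<dots> = (I (\<lambda>t. f t + g t) + I (\<lambda>t. f t - g t)) / 2"
      using int[OF Lp(1)] int[OF Lp(2)] by (simp add: I_def)
    finally show "(\<integral>t. ((f t)\<^sup>2 + (c * g t)\<^sup>2) powr (p / 2) \<partial>M)
        \<le> (I (\<lambda>t. f t + g t) + I (\<lambda>t. f t - g t)) / 2" .
  qed (use p in \<open>auto intro: integral_nonneg_AE\<close>)
  also have "\<dots> = ((((Lp_norm p M (\<lambda>t. f t + g t))\<^sup>2) powr (p / 2)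
      + ((Lp_norm p M (\<lambda>t. f t - g t))\<^sup>2) powr (p / 2)) / 2) powr (1 / (p / 2))"
    by (simp only: I_eq)
  also have "\<dots> \<le> ((Lp_norm p M (\<lambda>t. f t + g t))\<^sup>2 + (Lp_norm p M (\<lambda>t. f t - g t))\<^sup>2) / 2"
    using r by (intro powr_mean_le) auto
  finally show ?thesis .
qed

lemma Lp_norm_power2_parallelogram_le:
  fixes M :: "'a measure" and u v :: "'a \<Rightarrow> real"
  assumes p: "1 < p" "p \<le> 2" and u: "memLp p M u" and v: "memLp p M v"
  shows "(Lp_norm p M (\<lambda>t. u t + v t))\<^sup>2 + (p - 1) * (Lp_norm p M (\<lambda>t. u t - v t))\<^sup>2
    \<le> 2 * (Lp_norm p M u)\<^sup>2 + 2 * (Lp_norm p M v)\<^sup>2"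
proof -
  let ?f = "\<lambda>t. (1 / 2) * (u t + v t)" and ?g = "\<lambda>t. (1 / 2) * (u t - v t)"
  have p0: "0 < p"
    using p by simp
  then have fg: "memLp p M ?f" "memLp p M ?g"
    using memLp_cmult memLp_add[OF _ u v] memLp_diff[OF _ u v] by blast+
  have uv: "(\<lambda>t. ?f t + ?g t) = u" "(\<lambda>t. ?f t - ?g t) = v"
    by (simp_all add: fun_eq_iff field_simps)
  have "(Lp_norm p M ?f)\<^sup>2 + (p - 1) * (Lp_norm p M ?g)\<^sup>2
      \<le> ((Lp_norm p M u)\<^sup>2 + (Lp_norm p M v)\<^sup>2) / 2"
    using Lp_norm_power2_uniform_smoothness[OF p fg] unfolding uv .
  then show ?thesis
    unfolding Lp_norm_cmult[OF p0] by (simp add: field_simps)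
qed

theorem lemma2p1:
  fixes M :: "'a measure" and p :: real and x y z w :: "'a \<Rightarrow> real"
  assumes "1 < p" "p \<le> 2"
    and "memLp p M x" "memLp p M y" "memLp p M z" "memLp p M w"
  shows "(Lp_norm p M (\<lambda>t. y t - z t))\<^sup>2 + (p - 1) * (Lp_norm p M (\<lambda>t. x t - w t))\<^sup>2
    \<le> (Lp_norm p M (\<lambda>t. x t - y t))\<^sup>2 + (Lp_norm p M (\<lambda>t. y t - w t))\<^sup>2
     + (Lp_norm p M (\<lambda>t. w t - z t))\<^sup>2 + (Lp_norm p M (\<lambda>t. z t - x t))\<^sup>2"
proof -
  let ?N = "\<lambda>h. (Lp_norm p M h)\<^sup>2"
  \<comment> \<open>With \<open>m = (y + z) / 2\<close>: \<open>d1 = 2 (x - m)\<close> and \<open>d2 = 2 (m - w)\<close>.\<close>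
  define d1 where "d1 t = (x t - y t) - (z t - x t)" for t
  define d2 where "d2 t = (y t - w t) - (w t - z t)" for t
  have p: "0 < p"
    using assms by simp
  have "memLp p M d1" "memLp p M d2"
    unfolding d1_def d2_def by (intro memLp_diff p assms(3-6))+
  have I: "?N (\<lambda>t. y t - z t) + (p - 1) * ?N d1
      \<le> 2 * ?N (\<lambda>t. x t - y t) + 2 * ?N (\<lambda>t. z t - x t)"
    using Lp_norm_power2_parallelogram_le[OF assms(1,2)
        memLp_diff[OF p assms(3,4)] memLp_diff[OF p assms(5,3)]]
      Lp_norm_cong_abs[of "\<lambda>t. x t - y t + (z t - x t)" "\<lambda>t. y t - z t"]
    unfolding d1_def by auto
  have II: "?N (\<lambda>t. y t - z t) + (p - 1) * ?N d2
      \<le> 2 * ?N (\<lambda>t. y t - w t) + 2 * ?N (\<lambda>t. w t - z t)"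
    using Lp_norm_power2_parallelogram_le[OF assms(1,2)
        memLp_diff[OF p assms(4,6)] memLp_diff[OF p assms(6,5)]]
    unfolding d2_def by auto
  have III: "4 * ?N (\<lambda>t. x t - w t) \<le> 2 * ?N d1 + 2 * ?N d2"
  proof -
    have "Lp_norm p M (\<lambda>t. d1 t + d2 t) = Lp_norm p M (\<lambda>t. 2 * (x t - w t))"
      by (rule Lp_norm_cong_abs) (simp add: d1_def d2_def algebra_simps)
    also have "\<dots> = 2 * Lp_norm p M (\<lambda>t. x t - w t)"
      unfolding Lp_norm_cmult[OF p] by simp
    finally have "4 * ?N (\<lambda>t. x t - w t) + (p - 1) * ?N (\<lambda>t. d1 t - d2 t)
        \<le> 2 * ?N d1 + 2 * ?N d2"
      using Lp_norm_power2_parallelogram_le[OF assms(1,2) \<open>memLp p M d1\<close> \<open>memLp p M d2\<close>]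
      by (simp add: power_mult_distrib)
    moreover have "0 \<le> (p - 1) * ?N (\<lambda>t. d1 t - d2 t)"
      using assms(1) by simp
    ultimately show ?thesis
      by linarith
  qed
  have "(p - 1) * (4 * ?N (\<lambda>t. x t - w t)) \<le> (p - 1) * (2 * ?N d1 + 2 * ?N d2)"
    using III assms(1) by (intro mult_left_mono) auto
  then show ?thesis
    using I II by (simp add: algebra_simps)
qed

end
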